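(* In the toy model (see context), let $(\vec m,\vec z)$ be a configuration that is not a threshold configuration, let $i=\arg\max_k z_k$, and let $i_L<i<i_R$ be the indices closest to $i$ on the left and on the right, respectively, with $z_{i_L}+1\le z_i$ and $z_{i_R}+1\le z_i$. Let $\ell=(i-i_L)\wedge(i_R-i)$ and $W_k=[i_L+k,\,i_R-k]$ (integer interval) for $k=1,\dots,\ell$. Then the first $\ell$ iterations of the ZFA applied to $(\vec m,\vec z)$ cause jumps exactly at the sites of $W_1,\dots,W_\ell$, respectively; throughout this process, at least until after the $\ell$-th iteration, site $i$ remains the location of the maximum of $\vec z$ and the original value $z_i$ remains the maximum value. Consequently: (i) the total number of jumps in these $\ell$ iterations is $(i-i_L)(i_R-i)$; (ii) the resulting changes of the configuration are $z_{i_L}\to z_{i_L}+1$, $z_{i_R}\to z_{i_R}+1$, $z_i\to z_i-1$, $z_{i_L+i_R-i}\to z_{i_L+i_R-i}-1$ (in the case $i-i_L=i_R-i$ this means $z_i\to z_i-2$), all other $z_j$ unchanged, and $$m_j\to m_j+(j-i_L)_+-(j-i)_+-(j-i-i_R+i_L)_+ +(j-i_R)_+ .$$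
   Context: Toy model: $L$ sites with periodic boundary conditions (indices mod $L$, sequences extended periodically); disorder $\alpha_0,\dots,\alpha_{L-1}$ i.i.d. uniform on $(-\tfrac12,\tfrac12)$; $\Delta x_i=x_{i-1}-2x_i+x_{i+1}$ (periodic). A configuration is $\vec m\in\mathbb Z^L$ with rescaled well coordinates $z_i=\Delta m_i+\Delta\alpha_i$. A threshold configuration attains $\min_{\vec m}\max_i z_i$. A jump at site $j$ means $m_j\to m_j+1$, which gives $z_j\to z_j-2$, $z_{j\pm1}\to z_{j\pm1}+1$. One iteration of the zero-force avalanche (ZFA) applied to $\vec m$: record $z_{\max}=\max_k z_k$, then repeatedly jump the current maximizing site $\arg\max_k z_k$ as long as some current $z_k$ exceeds $z_{\max}$. Notation: $a\wedge b=\min(a,b)$, $x_+=\max(0,x)$. *)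

theory Defs
  imports Complex_Main "HOL-Library.Multiset"
begin

text \<open>Toy model with L sites and periodic boundary conditions. Sequences are
functions on int; only the values on the representatives 0..L-1 matter, and
every index is reduced mod L (periodic extension).\<close>

definition lap :: "nat \<Rightarrow> (int \<Rightarrow> 'a::ring_1) \<Rightarrow> int \<Rightarrow> 'a" where
  "lap L x j = x ((j - 1) mod int L) - 2 * x (j mod int L) + x ((j + 1) mod int L)"

definition zc :: "nat \<Rightarrow> (int \<Rightarrow> real) \<Rightarrow> (int \<Rightarrow> int) \<Rightarrow> int \<Rightarrow> real" where
  "zc L alpha m j = of_int (lap L m j) + lap L alpha j"

definition zmax :: "nat \<Rightarrow> (int \<Rightarrow> real) \<Rightarrow> (int \<Rightarrow> int) \<Rightarrow> real" where
  "zmax L alpha m = Max (zc L alpha m ` {0..<int L})"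

definition threshold :: "nat \<Rightarrow> (int \<Rightarrow> real) \<Rightarrow> (int \<Rightarrow> int) \<Rightarrow> bool" where
  "threshold L alpha m \<longleftrightarrow> (\<forall>m'. zmax L alpha m \<le> zmax L alpha m')"

text \<open>The site (representative in 0..L-1) where the maximum of z is attained
(unique under the genericity condition below).\<close>
definition amax :: "nat \<Rightarrow> (int \<Rightarrow> real) \<Rightarrow> (int \<Rightarrow> int) \<Rightarrow> int" where
  "amax L alpha m = (SOME k. k \<in> {0..<int L} \<and> zc L alpha m k = zmax L alpha m)"

definition jump :: "nat \<Rightarrow> int \<Rightarrow> (int \<Rightarrow> int) \<Rightarrow> (int \<Rightarrow> int)" where
  "jump L j m = m(j mod int L := m (j mod int L) + 1)"

text \<open>Continuation phase of one ZFA iteration with recorded value zm: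
keep jumping the current maximiser while some z exceeds zm.
zfa_cont L alpha zm m js m' : starting from m, the sites jumped are js
(in order) and the process stops at m'.\<close>
inductive zfa_cont :: "nat \<Rightarrow> (int \<Rightarrow> real) \<Rightarrow> real \<Rightarrow> (int \<Rightarrow> int) \<Rightarrow> int list \<Rightarrow> (int \<Rightarrow> int) \<Rightarrow> bool"
  for L alpha zm where
  stop: "zmax L alpha m \<le> zm \<Longrightarrow> zfa_cont L alpha zm m [] m"
| step: "zmax L alpha m > zm \<Longrightarrow> zfa_cont L alpha zm (jump L (amax L alpha m) m) js m'
          \<Longrightarrow> zfa_cont L alpha zm m (amax L alpha m # js) m'"

definition zfa_iter :: "nat \<Rightarrow> (int \<Rightarrow> real) \<Rightarrow> (int \<Rightarrow> int) \<Rightarrow> int list \<Rightarrow> (int \<Rightarrow> int) \<Rightarrow> bool" where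
  "zfa_iter L alpha m js m' \<longleftrightarrow>
     (\<exists>js'. js = amax L alpha m # js' \<and>
        zfa_cont L alpha (zmax L alpha m) (jump L (amax L alpha m) m) js' m')"

text \<open>Genericity of the disorder (holds almost surely): no two distinct
sites have Delta alpha values differing by an integer, so z-values at
distinct sites never tie.\<close>
definition generic :: "nat \<Rightarrow> (int \<Rightarrow> real) \<Rightarrow> bool" where
  "generic L alpha \<longleftrightarrow> (\<forall>j\<in>{0..<int L}. \<forall>k\<in>{0..<int L}. j \<noteq> k \<longrightarrow> lap L alpha j - lap L alpha k \<notin> \<int>)"

definition ind :: "nat \<Rightarrow> int \<Rightarrow> int \<Rightarrow> real" where
  "ind L a j = (if j mod int L = a mod int L then 1 else 0)"

definition pos :: "int \<Rightarrow> int" where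
  "pos x = max 0 x"

end

theory Submission
  imports Defs
begin

text \<open>
  After k iterations the configuration is m raised by one on each of the windows
  W_1, ..., W_k; its z-profile differs from the original one only by +1 at iL and iR and
  by -1 at iL + k and iR - k. Hence site i keeps the maximum M = z_i, the sites of W_(k+1)
  have z > M - 1 and the two sites just outside have z <= M - 1. Jumping i lifts its two
  neighbours above M, and from then on the jumped sites form an arc whose two outer
  neighbours are the only sites above M as long as they lie in W_(k+1): the avalanche fills
  W_(k+1) one site at a time and stops. When the window wraps around the circle (iR = iL + L)
  the sites iL and iR coincide and need z_iL <= M - 2, which is where non-threshold enters:
  a configuration with smaller maximum would have a Laplacian increment bounded by a dipole,
  which is impossible for a periodic integer function.
\<close>

section \<open>Periodicity, maximum and maximiser\<close>

lemma mod_eq_imp_eq_if_close: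
  fixes y a :: int
  assumes "y mod int L = a mod int L" and "\<bar>y - a\<bar> < int L"
  shows "y = a"
proof (rule ccontr)
  assume "y \<noteq> a"
  moreover have "int L dvd y - a" using assms(1) by (simp add: mod_eq_dvd_iff)
  ultimately have "\<bar>int L\<bar> \<le> \<bar>y - a\<bar>" by (intro dvd_imp_le_int) auto
  then show False using assms(2) by simp
qed

lemma lap_mod [simp]: "lap L x (y mod int L) = lap L x y"
  unfolding lap_def by (simp add: mod_simps)

lemma zc_mod [simp]: "zc L alpha m (y mod int L) = zc L alpha m y"
  unfolding zc_def by simp

lemma zc_cong_mod: "y mod int L = y' mod int L \<Longrightarrow> zc L alpha m y = zc L alpha m y'"
  by (metis zc_mod)

lemma zc_diff: "zc L alpha m' y = zc L alpha m y + of_int (lap L (\<lambda>x. m' x - m x) y)"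
  unfolding zc_def lap_def by (simp add: algebra_simps)

lemma zc_le_zmax: "0 < L \<Longrightarrow> zc L alpha m y \<le> zmax L alpha m"
proof -
  assume "0 < L"
  then have "y mod int L \<in> {0..<int L}" by simp
  then have "zc L alpha m (y mod int L) \<le> zmax L alpha m"
    unfolding zmax_def by (intro Max_ge) (auto simp del: zc_mod)
  then show ?thesis by simp
qed

lemma zmax_le: "0 < L \<Longrightarrow> (\<And>y. zc L alpha m y \<le> M) \<Longrightarrow> zmax L alpha m \<le> M"
  unfolding zmax_def by (subst Max_le_iff) auto

lemma amax_in_range: "0 < L \<Longrightarrow> amax L alpha m \<in> {0..<int L}"
  and zc_amax: "0 < L \<Longrightarrow> zc L alpha m (amax L alpha m) = zmax L alpha m"
proof -
  assume "0 < L"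
  then have "zmax L alpha m \<in> zc L alpha m ` {0..<int L}"
    unfolding zmax_def by (intro Max_in) auto
  then have "\<exists>k. k \<in> {0..<int L} \<and> zc L alpha m k = zmax L alpha m" by auto
  then have "amax L alpha m \<in> {0..<int L} \<and> zc L alpha m (amax L alpha m) = zmax L alpha m"
    unfolding amax_def by (rule someI_ex)
  then show "amax L alpha m \<in> {0..<int L}" "zc L alpha m (amax L alpha m) = zmax L alpha m"
    by auto
qed

lemma generic_zc_inj:
  assumes "generic L alpha" "x \<in> {0..<int L}" "y \<in> {0..<int L}"
    and "zc L alpha m x = zc L alpha m y"
  shows "x = y"
proof (rule ccontr)
  assume "x \<noteq> y"
  then have "lap L alpha x - lap L alpha y \<notin> \<int>"
    using assms unfolding generic_def by blast
  moreover have "lap L alpha x - lap L alpha y = of_int (lap L m y - lap L m x)"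
    using assms(4) unfolding zc_def by simp
  ultimately show False by (metis Ints_of_int)
qed

lemma zmax_amax_eq:
  assumes "0 < L" "generic L alpha" "i \<in> {0..<int L}"
    and "\<And>y. zc L alpha m y \<le> zc L alpha m i"
  shows "zmax L alpha m = zc L alpha m i" and "amax L alpha m = i"
proof -
  show zm: "zmax L alpha m = zc L alpha m i"
    using zmax_le[OF assms(1) assms(4)] zc_le_zmax[OF assms(1)] by (simp add: order_antisym)
  show "amax L alpha m = i"
    using generic_zc_inj[OF assms(2) amax_in_range[OF assms(1), of alpha m] assms(3), of m]
      zc_amax[OF assms(1), of alpha m] zm
    by simp
qed

lemma ind_nonneg: "0 \<le> ind L c y"
  unfolding ind_def by auto

lemma ind_self [simp]: "ind L c c = 1"
  unfolding ind_def by auto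

lemma ind_eq_0_if_close: "\<bar>y - c\<bar> < int L \<Longrightarrow> y \<noteq> c \<Longrightarrow> ind L c y = 0"
  unfolding ind_def using mod_eq_imp_eq_if_close[of y L c] by auto

lemma zc_add_two_ind_le:
  assumes "\<And>y. zc L alpha m y \<le> M"
    and "zc L alpha m u + 1 \<le> M" "zc L alpha m v + 1 \<le> M"
    and "u mod int L = v mod int L \<Longrightarrow> zc L alpha m u + 2 \<le> M"
  shows "zc L alpha m y + ind L u y + ind L v y \<le> M"
proof (cases "y mod int L = u mod int L")
  case True
  then have "zc L alpha m y = zc L alpha m u" by (rule zc_cong_mod)
  then show ?thesis
    using True assms(2,4) unfolding ind_def by auto
next
  case False
  moreover have "zc L alpha m y = zc L alpha m v" if "y mod int L = v mod int L"
    using that by (rule zc_cong_mod)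
  ultimately show ?thesis
    using assms(1)[of y] assms(3) unfolding ind_def by auto
qed

section \<open>Raising the configuration on arcs\<close>

definition site :: "nat \<Rightarrow> int \<Rightarrow> int \<Rightarrow> int" where
  "site L a x = (if x mod int L = a mod int L then 1 else 0)"

text \<open>For \<open>0 \<le> q - p < L\<close> this is the indicator of the cyclic arc p, ..., q.\<close>

definition arc :: "nat \<Rightarrow> int \<Rightarrow> int \<Rightarrow> int \<Rightarrow> int" where
  "arc L p q x = (\<Sum>t\<in>{p..q}. site L t x)"

text \<open>As in \<open>jump\<close>, only the representatives 0, ..., L - 1 are changed, so that jumping
  preserves this form.\<close>

definition add_on_sites :: "nat \<Rightarrow> (int \<Rightarrow> int) \<Rightarrow> (int \<Rightarrow> int) \<Rightarrow> int \<Rightarrow> int" where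
  "add_on_sites L m c x = (if 0 \<le> x \<and> x < int L then m x + c x else m x)"

lemma of_int_site: "of_int (site L a y) = ind L a y"
  unfolding site_def ind_def by simp

lemma lap_add: "lap L (\<lambda>x. f x + g x) y = lap L f y + lap L g y"
  unfolding lap_def by (simp add: algebra_simps)

lemma lap_site: "lap L (site L a) y = site L (a + 1) y - 2 * site L a y + site L (a - 1) y"
proof -
  have "((y - 1) mod int L = a mod int L) = (y mod int L = (a + 1) mod int L)"
    and "((y + 1) mod int L = a mod int L) = (y mod int L = (a - 1) mod int L)"
    by (simp_all add: mod_eq_dvd_iff algebra_simps)
  then show ?thesis unfolding lap_def site_def by simp
qed

lemma arc_extend_left: "p \<le> q + 1 \<Longrightarrow> arc L (p - 1) q x = arc L p q x + site L (p - 1) x"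
proof -
  assume "p \<le> q + 1"
  then have "{p - 1..q} = insert (p - 1) {p..q}" by auto
  then show ?thesis unfolding arc_def by simp
qed

lemma arc_extend_right: "p \<le> q + 1 \<Longrightarrow> arc L p (q + 1) x = arc L p q x + site L (q + 1) x"
proof -
  assume "p \<le> q + 1"
  then have "{p..q + 1} = insert (q + 1) {p..q}" by auto
  then show ?thesis unfolding arc_def by simp
qed

lemma lap_arc:
  assumes "p \<le> q + 1"
  shows "lap L (arc L p q) y = site L (p - 1) y - site L p y - site L q y + site L (q + 1) y"
proof -
  from assms have "p - 1 \<le> q" by simp
  then show ?thesis
  proof (induction q rule: int_ge_induct)
    case base
    then show ?case unfolding arc_def lap_def by simp
  next
    case (step q)
    then have "arc L p (q + 1) = (\<lambda>x. arc L p q x + site L (q + 1) x)"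
      by (intro ext arc_extend_right) simp
    then show ?case
      using step.IH by (simp add: lap_add lap_site algebra_simps)
  qed
qed

lemma arc_mod_eq:
  assumes "\<And>t. p \<le> t \<Longrightarrow> t \<le> q \<Longrightarrow> \<bar>j - t\<bar> < int L"
  shows "arc L p q (j mod int L) = (if p \<le> j \<and> j \<le> q then 1 else 0)"
proof -
  have "site L t (j mod int L) = (if t = j then 1 else 0)" if "t \<in> {p..q}" for t
    using assms that mod_eq_imp_eq_if_close[of j L t] unfolding site_def by auto
  then have "arc L p q (j mod int L) = (\<Sum>t\<in>{p..q}. if t = j then 1 else 0)"
    unfolding arc_def by (rule sum.cong[OF refl])
  then show ?thesis by simp
qed

lemma zc_add_on_sites:
  "0 < L \<Longrightarrow> zc L alpha (add_on_sites L m c) y = zc L alpha m y + of_int (lap L c y)"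
  unfolding zc_def lap_def add_on_sites_def by simp

lemma zc_add_on_sites_arc:
  assumes "0 < L" "p \<le> q + 1"
  shows "zc L alpha (add_on_sites L m (arc L p q)) y
    = zc L alpha m y + ind L (p - 1) y - ind L p y - ind L q y + ind L (q + 1) y"
  using assms by (simp add: zc_add_on_sites lap_arc of_int_site)

lemma jump_add_on_sites:
  "0 < L \<Longrightarrow> jump L u (add_on_sites L m c) = add_on_sites L m (\<lambda>x. c x + site L u x)"
  unfolding jump_def add_on_sites_def site_def by (auto simp: fun_eq_iff)

lemma add_on_sites_zero: "add_on_sites L m (\<lambda>_. 0) = m"
  unfolding add_on_sites_def by auto

section \<open>One iteration of the avalanche\<close>

lemma zc_arc_config_gt_imp_growth_site:
  fixes m :: "int \<Rightarrow> int"
  assumes L: "0 < L" and pq: "a \<le> p" "p \<le> q" "q \<le> b"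
    and le: "\<And>y. zc L alpha m y \<le> M"
    and outer: "zc L alpha m (a - 1) + 1 \<le> M" "zc L alpha m (b + 1) + 1 \<le> M"
    and wrap: "(a - 1) mod int L = (b + 1) mod int L \<Longrightarrow> zc L alpha m (a - 1) + 2 \<le> M"
    and gt: "M < zc L alpha (add_on_sites L m (arc L p q)) y"
  shows "y mod int L = (p - 1) mod int L \<and> a < p \<or> y mod int L = (q + 1) mod int L \<and> q < b"
proof (rule ccontr)
  assume "\<not> ?thesis"
  moreover have "p = a \<or> a < p" "q = b \<or> q < b" using pq by auto
  ultimately have "ind L (p - 1) y \<le> ind L (a - 1) y" "ind L (q + 1) y \<le> ind L (b + 1) y"
    unfolding ind_def by auto
  moreover have "zc L alpha (add_on_sites L m (arc L p q)) y
      = zc L alpha m y + ind L (p - 1) y - ind L p y - ind L q y + ind L (q + 1) y"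
    using L pq by (intro zc_add_on_sites_arc) auto
  ultimately have "zc L alpha (add_on_sites L m (arc L p q)) y
      \<le> zc L alpha m y + ind L (a - 1) y + ind L (b + 1) y"
    using ind_nonneg[of L p y] ind_nonneg[of L q y] by linarith
  also have "\<dots> \<le> M"
    using le outer wrap by (rule zc_add_two_ind_le)
  finally show False using gt by simp
qed

lemma zc_arc_config_growth_sites_gt:
  fixes m :: "int \<Rightarrow> int"
  assumes L: "0 < L" and pq: "a \<le> p" "p \<le> q" "q \<le> b" and width: "b - a + 2 \<le> int L"
    and inner: "\<And>y. a \<le> y \<Longrightarrow> y \<le> b \<Longrightarrow> M - 1 < zc L alpha m y"
  shows "a < p \<Longrightarrow> M < zc L alpha (add_on_sites L m (arc L p q)) (p - 1)"
    and "q < b \<Longrightarrow> M < zc L alpha (add_on_sites L m (arc L p q)) (q + 1)"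
proof -
  have zS: "zc L alpha (add_on_sites L m (arc L p q)) y
      = zc L alpha m y + ind L (p - 1) y - ind L p y - ind L q y + ind L (q + 1) y" for y
    using L pq by (intro zc_add_on_sites_arc) auto
  have close: "ind L c y = 0" if "\<bar>y - c\<bar> < int L" "y \<noteq> c" for c y
    using that by (rule ind_eq_0_if_close)
  show "M < zc L alpha (add_on_sites L m (arc L p q)) (p - 1)" if "a < p"
    using zS[of "p - 1"] close[of "p - 1" p] close[of "p - 1" q] close[of "p - 1" "q + 1"]
      inner[of "p - 1"] that pq width by simp
  show "M < zc L alpha (add_on_sites L m (arc L p q)) (q + 1)" if "q < b"
    using zS[of "q + 1"] close[of "q + 1" p] close[of "q + 1" q] close[of "q + 1" "p - 1"]
      inner[of "q + 1"] that pq width by simp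
qed

lemma jump_mod: "jump L (j mod int L) = jump L j"
  unfolding jump_def by simp

lemma jump_arc_config:
  assumes "0 < L" "p \<le> q + 1"
  shows "jump L (p - 1) (add_on_sites L m (arc L p q)) = add_on_sites L m (arc L (p - 1) q)"
    and "jump L (q + 1) (add_on_sites L m (arc L p q)) = add_on_sites L m (arc L p (q + 1))"
  using assms by (auto simp: jump_add_on_sites add_on_sites_def arc_extend_left arc_extend_right
      fun_eq_iff)

lemma jump_growth_site_extends_arc:
  assumes L: "0 < L" and pq: "a \<le> p" "p \<le> q" "q \<le> b" and u: "u mod int L = u"
    and growth: "u mod int L = (p - 1) mod int L \<and> a < p \<or> u mod int L = (q + 1) mod int L \<and> q < b"
  obtains p' q' where "a \<le> p'" "p' \<le> q'" "q' \<le> b"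
    and "nat ((p' - a) + (b - q')) < nat ((p - a) + (b - q))"
    and "jump L u (add_on_sites L m (arc L p q)) = add_on_sites L m (arc L p' q')"
    and "mset (map (\<lambda>j. j mod int L) [p'..q']) = add_mset u (mset (map (\<lambda>j. j mod int L) [p..q]))"
proof -
  have jump_cong: "jump L u S = jump L c S" if "u mod int L = c mod int L" for c S
    by (metis jump_mod that)
  from growth show ?thesis
  proof
    assume left: "u mod int L = (p - 1) mod int L \<and> a < p"
    then have "jump L u (add_on_sites L m (arc L p q)) = add_on_sites L m (arc L (p - 1) q)"
      using jump_cong[of "p - 1"] jump_arc_config(1)[OF L, of p q m] pq by simp
    moreover have "[p - 1..q] = (p - 1) # [p..q]" using pq by (simp add: upto_rec1)
    ultimately show ?thesis using that[of "p - 1" q] left u pq by simp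
  next
    assume right: "u mod int L = (q + 1) mod int L \<and> q < b"
    then have "jump L u (add_on_sites L m (arc L p q)) = add_on_sites L m (arc L p (q + 1))"
      using jump_cong[of "q + 1"] jump_arc_config(2)[OF L, of p q m] pq by simp
    moreover have "[p..q + 1] = [p..q] @ [q + 1]" using pq by (simp add: upto_rec2)
    ultimately show ?thesis using that[of p "q + 1"] right u pq by simp
  qed
qed

text \<open>While the jumped sites form the arc p, ..., q inside a, ..., b, only p - 1 and q + 1 can exceed
  M, and only while they lie in a, ..., b; so each jump extends the arc by one site until it is
  a, ..., b and the avalanche stops.\<close>

lemma zfa_cont_fills_arc:
  fixes m :: "int \<Rightarrow> int"
  assumes L: "0 < L"
    and pq: "a \<le> p" "p \<le> q" "q \<le> b" and width: "b - a + 2 \<le> int L"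
    and le: "\<And>y. zc L alpha m y \<le> M"
    and inner: "\<And>y. a \<le> y \<Longrightarrow> y \<le> b \<Longrightarrow> M - 1 < zc L alpha m y"
    and outer: "zc L alpha m (a - 1) + 1 \<le> M" "zc L alpha m (b + 1) + 1 \<le> M"
    and wrap: "(a - 1) mod int L = (b + 1) mod int L \<Longrightarrow> zc L alpha m (a - 1) + 2 \<le> M"
  shows "\<exists>js. zfa_cont L alpha M (add_on_sites L m (arc L p q)) js (add_on_sites L m (arc L a b))
      \<and> mset js + mset (map (\<lambda>j. j mod int L) [p..q])
        = mset (map (\<lambda>j. j mod int L) [a..b])"
  using pq
proof (induction "nat ((p - a) + (b - q))" arbitrary: p q rule: less_induct)
  case less
  define S where "S = add_on_sites L m (arc L p q)"
  have growth_site: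
      "y mod int L = (p - 1) mod int L \<and> a < p \<or> y mod int L = (q + 1) mod int L \<and> q < b"
    if "M < zc L alpha S y" for y
    using L less.prems le outer wrap that unfolding S_def by (rule zc_arc_config_gt_imp_growth_site)
  show ?case
  proof (cases "p = a \<and> q = b")
    case True
    have "zmax L alpha S \<le> M"
    proof (rule zmax_le[OF L])
      show "zc L alpha S y \<le> M" for y using growth_site[of y] True by force
    qed
    then have "zfa_cont L alpha M S [] S" by (rule zfa_cont.stop)
    then show ?thesis using True S_def by auto
  next
    case False
    then have "a < p \<or> q < b" using less.prems by auto
    then have "M < zc L alpha S (p - 1) \<or> M < zc L alpha S (q + 1)"
      using zc_arc_config_growth_sites_gt[OF L less.prems width inner] unfolding S_def by blast
    then have exceeds: "M < zmax L alpha S"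
      using zc_le_zmax[OF L, of alpha S] by (meson less_le_trans)
    define u where "u = amax L alpha S"
    have u: "u mod int L = u" "M < zc L alpha S u"
      using amax_in_range[OF L, of alpha S] zc_amax[OF L, of alpha S] exceeds unfolding u_def by auto
    obtain p' q' where p'q': "a \<le> p'" "p' \<le> q'" "q' \<le> b"
      and smaller: "nat ((p' - a) + (b - q')) < nat ((p - a) + (b - q))"
      and jump: "jump L u S = add_on_sites L m (arc L p' q')"
      and jumps: "mset (map (\<lambda>j. j mod int L) [p'..q'])
        = add_mset u (mset (map (\<lambda>j. j mod int L) [p..q]))"
      using jump_growth_site_extends_arc[OF L less.prems u(1) growth_site[OF u(2)]]
      unfolding S_def by blast
    obtain js
      where js: "zfa_cont L alpha M (add_on_sites L m (arc L p' q')) js (add_on_sites L m (arc L a b))"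
        "mset js + mset (map (\<lambda>j. j mod int L) [p'..q']) = mset (map (\<lambda>j. j mod int L) [a..b])"
      using less.hyps[OF smaller p'q'] by blast
    have "zfa_cont L alpha M S (u # js) (add_on_sites L m (arc L a b))"
      unfolding u_def using exceeds js(1) jump u_def by (intro zfa_cont.step) auto
    then show ?thesis using js(2) jumps S_def by (intro exI[of _ "u # js"]) simp
  qed
qed

lemma zfa_iter_fills_arc:
  fixes m :: "int \<Rightarrow> int"
  assumes L: "0 < L" and gen: "generic L alpha" and i: "i \<in> {0..<int L}"
    and ai: "a \<le> i" "i \<le> b" and width: "b - a + 2 \<le> int L"
    and le: "\<And>y. zc L alpha m y \<le> zc L alpha m i"
    and inner: "\<And>y. a \<le> y \<Longrightarrow> y \<le> b \<Longrightarrow> zc L alpha m i - 1 < zc L alpha m y"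
    and outer: "zc L alpha m (a - 1) + 1 \<le> zc L alpha m i"
      "zc L alpha m (b + 1) + 1 \<le> zc L alpha m i"
    and wrap: "(a - 1) mod int L = (b + 1) mod int L
      \<Longrightarrow> zc L alpha m (a - 1) + 2 \<le> zc L alpha m i"
  shows "\<exists>js. zfa_iter L alpha m js (add_on_sites L m (arc L a b))
    \<and> mset js = mset (map (\<lambda>j. j mod int L) [a..b])"
proof -
  have zm: "zmax L alpha m = zc L alpha m i" and am: "amax L alpha m = i"
    using zmax_amax_eq[OF L gen i le] by auto
  have "jump L i m = jump L i (add_on_sites L m (\<lambda>_. 0))" by (simp add: add_on_sites_zero)
  also have "\<dots> = add_on_sites L m (arc L i i)"
    unfolding jump_add_on_sites[OF L] by (simp add: arc_def add_on_sites_def fun_eq_iff)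
  finally have jump: "jump L i m = add_on_sites L m (arc L i i)" .
  obtain js where js: "zfa_cont L alpha (zc L alpha m i) (add_on_sites L m (arc L i i)) js
      (add_on_sites L m (arc L a b))"
    "mset js + mset (map (\<lambda>j. j mod int L) [i..i]) = mset (map (\<lambda>j. j mod int L) [a..b])"
    using zfa_cont_fills_arc[OF L ai(1) order_refl ai(2) width le inner outer wrap] by blast
  have "zfa_iter L alpha m (i # js) (add_on_sites L m (arc L a b))"
    unfolding zfa_iter_def using js(1) jump am zm by simp
  moreover have "mset (i # js) = mset (map (\<lambda>j. j mod int L) [a..b])"
    using js(2) i by simp
  ultimately show ?thesis by blast
qed

section \<open>The window wrapping around the circle\<close>

lemma two_level_sum_nonzero:
  fixes D :: "nat \<Rightarrow> int"
  assumes "0 < n" and levels: "\<And>t. t < n \<Longrightarrow> D 0 - 1 \<le> D t \<and> D t \<le> D 0"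
    and last: "D (n - 1) = D 0 - 1"
  shows "(\<Sum>t<n. D t) \<noteq> 0"
proof
  assume sum0: "(\<Sum>t<n. D t) = 0"
  define e where "e t = D 0 - D t" for t
  have "(\<Sum>t<n. e t) = int n * D 0"
    unfolding e_def using sum0 by (simp add: sum_subtractf)
  moreover have "1 \<le> (\<Sum>t<n. e t)"
  proof -
    have "e (n - 1) \<le> (\<Sum>t<n. e t)"
      by (rule member_le_sum) (use assms in \<open>auto simp: e_def\<close>)
    then show ?thesis using last unfolding e_def by simp
  qed
  moreover have "(\<Sum>t<n. e t) < (\<Sum>t<n. 1)"
  proof (rule sum_strict_mono_ex1)
    show "\<forall>t\<in>{..<n}. e t \<le> 1" using levels unfolding e_def by force
    show "\<exists>t\<in>{..<n}. e t < 1" using \<open>0 < n\<close> unfolding e_def by force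
  qed simp
  ultimately have "0 < int n * D 0" "int n * D 0 < int n * 1" by auto
  then show False by (simp add: zero_less_mult_iff mult_less_cancel_left)
qed

text \<open>The discrete gradient D along one period starting at p is nonincreasing on 0, ..., L - 1,
  drops at s and rises by at most 1 when wrapping around; so it takes exactly the two values
  D 0 and D 0 - 1, while its sum telescopes to 0.\<close>

lemma periodic_lap_not_below_dipole:
  fixes d :: "int \<Rightarrow> int"
  assumes L: "0 < L" and s: "0 < s" "s < int L"
    and rest: "\<And>t. 0 < t \<Longrightarrow> t < int L \<Longrightarrow> lap L d (p + t) \<le> 0"
    and sink: "lap L d (p + s) \<le> -1" and source: "lap L d p \<le> 1"
  shows False
proof -
  define D where "D t = d ((p + int t + 1) mod int L) - d ((p + int t) mod int L)" for t
  have lap_D: "lap L d (p + int t) = D t - D (t - 1)" if "1 \<le> t" for t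
  proof -
    have "int (t - 1) = int t - 1" using that by simp
    then show ?thesis unfolding lap_def D_def by (simp add: algebra_simps)
  qed
  have "(p + int L + 1) mod int L = (p + 1) mod int L"
    by (metis add.commute add.left_commute mod_add_self2)
  then have D_period: "D L = D 0" unfolding D_def by simp
  have sum_D: "(\<Sum>t<L. D t) = 0"
  proof -
    define f where "f t = d ((p + int t) mod int L)" for t
    have "(\<Sum>t<L. D t) = (\<Sum>t<L. f (Suc t) - f t)"
      unfolding D_def f_def by (simp add: algebra_simps)
    also have "\<dots> = f L - f 0" by (rule sum_lessThan_telescope)
    also have "\<dots> = 0" unfolding f_def by simp
    finally show ?thesis .
  qed
  have D_antitone: "D u \<le> D t" if "t \<le> u" "u \<le> L - 1" for t u
    using that
  proof (induction u)
    case (Suc u)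
    have "D (Suc u) \<le> D u"
      using lap_D[of "Suc u"] rest[of "int (Suc u)"] Suc.prems by simp
    then show ?case using Suc by (cases "t = Suc u") auto
  qed simp
  define n where "n = nat s"
  have n: "1 \<le> n" "n \<le> L - 1" "p + int n = p + s" using s unfolding n_def by auto
  have "D n \<le> D (n - 1) - 1" using lap_D[OF n(1)] sink n(3) by simp
  moreover have "D L \<le> D (L - 1) + 1"
  proof -
    have "lap L d (p + int L) = lap L d p" by (metis lap_mod mod_add_self2)
    then show ?thesis using lap_D[of L] L source by simp
  qed
  moreover have "D (L - 1) \<le> D n" "D (n - 1) \<le> D 0"
    using D_antitone[of n "L - 1"] D_antitone[of 0 "n - 1"] n by auto
  ultimately have last: "D (L - 1) = D 0 - 1" using D_period by linarith
  have "D 0 - 1 \<le> D t \<and> D t \<le> D 0" if "t < L" for t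
    using D_antitone[of 0 t] D_antitone[of t "L - 1"] that last by simp
  then show False using two_level_sum_nonzero[OF L _ last] sum_D by blast
qed

text \<open>A configuration m' with smaller maximum would satisfy \<open>\<Delta>(m' - m) \<le> e_iL - e_i\<close>.\<close>

lemma zc_wrapped_boundary_gap:
  fixes m :: "int \<Rightarrow> int"
  assumes L: "0 < L" and not_thr: "\<not> threshold L alpha m"
    and max: "zc L alpha m i = zmax L alpha m"
    and iLR: "iL < i" "i < iR" and wrapped: "iR - iL = int L"
    and interior: "\<forall>j. iL < j \<and> j < iR \<longrightarrow> zc L alpha m i < zc L alpha m j + 1"
  shows "zc L alpha m iL + 2 \<le> zc L alpha m i"
proof (rule ccontr)
  assume gap: "\<not> ?thesis"
  obtain m' where m': "zmax L alpha m' < zmax L alpha m"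
    using not_thr unfolding threshold_def by (meson not_le)
  define \<delta> where "\<delta> = lap L (\<lambda>x. m' x - m x)"
  have below: "zc L alpha m y + of_int (\<delta> y) < zc L alpha m i" for y
    using zc_diff[of L alpha m' y m] zc_le_zmax[OF L, of alpha m' y] m' max
    unfolding \<delta>_def by linarith
  show False
  proof (rule periodic_lap_not_below_dipole[OF L])
    show "0 < i - iL" "i - iL < int L" using iLR wrapped by auto
    show "lap L (\<lambda>x. m' x - m x) (iL + t) \<le> 0" if "0 < t" "t < int L" for t
    proof -
      have "zc L alpha m i < zc L alpha m (iL + t) + 1"
        using interior that wrapped by simp
      then have "of_int (\<delta> (iL + t)) < (1::real)"
        using below[of "iL + t"] by linarith
      then show ?thesis unfolding \<delta>_def by simp
    qed
    have "of_int (\<delta> i) < (0::real)" using below[of i] by simp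
    then show "lap L (\<lambda>x. m' x - m x) (iL + (i - iL)) \<le> -1" unfolding \<delta>_def by simp
    have "of_int (\<delta> iL) < (2::real)" using below[of iL] gap by simp
    then show "lap L (\<lambda>x. m' x - m x) iL \<le> 1" unfolding \<delta>_def by simp
  qed
qed

section \<open>Successive windows\<close>

fun window_config :: "nat \<Rightarrow> (int \<Rightarrow> int) \<Rightarrow> int \<Rightarrow> int \<Rightarrow> nat \<Rightarrow> int \<Rightarrow> int" where
  "window_config L m iL iR 0 = m"
| "window_config L m iL iR (Suc k) =
    add_on_sites L (window_config L m iL iR k) (arc L (iL + int (Suc k)) (iR - int (Suc k)))"

lemma zc_window_config:
  assumes L: "0 < L" and k: "2 * int k \<le> iR - iL + 1"
  shows "zc L alpha (window_config L m iL iR k) y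
    = zc L alpha m y + ind L iL y + ind L iR y - ind L (iL + int k) y - ind L (iR - int k) y"
  using k
proof (induction k)
  case (Suc k)
  have "iL + int (Suc k) \<le> iR - int (Suc k) + 1" using Suc.prems by simp
  then show ?case
    using Suc zc_add_on_sites_arc[OF L, of "iL + int (Suc k)" "iR - int (Suc k)"]
    by (simp add: algebra_simps)
qed simp

lemma window_config_mod_eq:
  assumes L: "0 < L" and width: "iR - iL \<le> int L" and j: "iL \<le> j" "j < iL + int L"
  shows "window_config L m iL iR k (j mod int L)
    = m (j mod int L) + max 0 (min (int k) (min (j - iL) (iR - j)))"
proof (induction k)
  case (Suc k)
  have "arc L (iL + int (Suc k)) (iR - int (Suc k)) (j mod int L)
      = (if iL + int (Suc k) \<le> j \<and> j \<le> iR - int (Suc k) then 1 else 0)"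
    using width j by (intro arc_mod_eq) auto
  moreover have "0 \<le> j mod int L" "j mod int L < int L" using L by auto
  ultimately show ?case
    using Suc by (auto simp: add_on_sites_def max_def min_def)
qed simp

lemma sum_length_shrinking_upto:
  "2 * int n \<le> b - a + 1
    \<Longrightarrow> int (\<Sum>k\<in>{1..n}. length [a + int k..b - int k]) = int n * (b - a - int n)"
  by (induction n) (auto simp: sum.cl_ivl_Suc algebra_simps)

lemma window_profile_eq_pos:
  fixes iL i iR j :: int
  assumes "iL < i" "i < iR" "iL \<le> j"
  shows "max 0 (min (min (i - iL) (iR - i)) (min (j - iL) (iR - j)))
    = pos (j - iL) - pos (j - i) - pos (j - (iL + iR - i)) + pos (j - iR)"
  using assms unfolding pos_def by (auto simp: max_def min_def)

context
  fixes L :: nat and alpha :: "int \<Rightarrow> real" and m :: "int \<Rightarrow> int" and i iL iR :: int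
  assumes L: "0 < L" and gen: "generic L alpha" and not_thr: "\<not> threshold L alpha m"
    and i: "i \<in> {0..<int L}" and max: "zc L alpha m i = zmax L alpha m"
    and iLR: "iL < i" "i < iR"
    and boundary: "zc L alpha m iL + 1 \<le> zc L alpha m i" "zc L alpha m iR + 1 \<le> zc L alpha m i"
    and interior: "\<forall>j. iL < j \<and> j < iR \<longrightarrow> zc L alpha m i < zc L alpha m j + 1"
begin

lemma zc_le_max: "zc L alpha m y \<le> zc L alpha m i"
  using zc_le_zmax[OF L, of alpha m y] max by simp

lemma zc_interior_gt: "iL < y \<Longrightarrow> y < iR \<Longrightarrow> zc L alpha m i - 1 < zc L alpha m y"
  using interior by force

lemma window_width_le: "iR - iL \<le> int L"
proof (rule ccontr)
  assume "\<not> ?thesis"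
  then have "zc L alpha m i - 1 < zc L alpha m (iR - int L)" using zc_interior_gt L by simp
  moreover have "zc L alpha m (iR - int L) = zc L alpha m iR" by (rule zc_cong_mod) simp
  ultimately show False using boundary by simp
qed

lemma window_ends_cong_imp_width_eq: "iL mod int L = iR mod int L \<Longrightarrow> iR - iL = int L"
  using mod_eq_imp_eq_if_close[of iL L iR] iLR window_width_le by force

lemma zc_window_config_le:
  assumes "iL + int k \<le> i" "i \<le> iR - int k"
  shows "zc L alpha (window_config L m iL iR k) y \<le> zc L alpha m i"
proof -
  have "zc L alpha (window_config L m iL iR k) y \<le> zc L alpha m y + ind L iL y + ind L iR y"
    using zc_window_config[OF L, of k iR iL alpha m y] assms ind_nonneg[of L "iL + int k" y]
      ind_nonneg[of L "iR - int k" y] by linarith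
  also have "\<dots> \<le> zc L alpha m i"
    using zc_le_max boundary window_ends_cong_imp_width_eq
      zc_wrapped_boundary_gap[OF L not_thr max iLR _ interior]
    by (intro zc_add_two_ind_le) auto
  finally show ?thesis .
qed

lemma zc_window_config_inner:
  assumes "iL + int k < y" "y < iR - int k"
  shows "zc L alpha (window_config L m iL iR k) y = zc L alpha m y"
proof -
  have "ind L c y = 0" if "c \<in> {iL, iR, iL + int k, iR - int k}" for c
    using that assms window_width_le by (intro ind_eq_0_if_close) auto
  then show ?thesis
    using assms by (subst zc_window_config[OF L]) auto
qed

lemma zc_window_config_ends:
  assumes k: "iL + int k < i" "i < iR - int k"
  shows "zc L alpha (window_config L m iL iR k) (iL + int k) + 1 \<le> zc L alpha m i"
    and "zc L alpha (window_config L m iL iR k) (iR - int k) + 1 \<le> zc L alpha m i"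
    and "(iL + int k) mod int L = (iR - int k) mod int L
      \<Longrightarrow> zc L alpha (window_config L m iL iR k) (iL + int k) + 2 \<le> zc L alpha m i"
proof -
  have zk: "zc L alpha (window_config L m iL iR k) y
      = zc L alpha m y + ind L iL y + ind L iR y - ind L (iL + int k) y - ind L (iR - int k) y" for y
    using k by (intro zc_window_config[OF L]) auto
  have close: "ind L c y = 0" if "\<bar>y - c\<bar> < int L" "y \<noteq> c" for c y
    using that by (rule ind_eq_0_if_close)
  show "zc L alpha (window_config L m iL iR k) (iL + int k) + 1 \<le> zc L alpha m i"
  proof (cases "k = 0")
    case False
    then have "zc L alpha (window_config L m iL iR k) (iL + int k) = zc L alpha m (iL + int k) - 1"
      using zk[of "iL + int k"] close[of "iL + int k" iL] close[of "iL + int k" iR]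
        close[of "iL + int k" "iR - int k"] k window_width_le by simp
    then show ?thesis using zc_le_max[of "iL + int k"] by simp
  qed (use zk[of iL] boundary in simp)
  show "zc L alpha (window_config L m iL iR k) (iR - int k) + 1 \<le> zc L alpha m i"
  proof (cases "k = 0")
    case False
    then have "zc L alpha (window_config L m iL iR k) (iR - int k) = zc L alpha m (iR - int k) - 1"
      using zk[of "iR - int k"] close[of "iR - int k" iL] close[of "iR - int k" iR]
        close[of "iR - int k" "iL + int k"] k window_width_le by simp
    then show ?thesis using zc_le_max[of "iR - int k"] by simp
  qed (use zk[of iR] boundary in simp)
  assume "(iL + int k) mod int L = (iR - int k) mod int L"
  then have "\<not> \<bar>(iR - int k) - (iL + int k)\<bar> < int L"
    using mod_eq_imp_eq_if_close[of "iR - int k" L "iL + int k"] k by force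
  then have "k = 0" "iR - iL = int L" using window_width_le k by auto
  then show "zc L alpha (window_config L m iL iR k) (iL + int k) + 2 \<le> zc L alpha m i"
    using zk[of iL] zc_wrapped_boundary_gap[OF L not_thr max iLR _ interior] by simp
qed

lemma zfa_iter_window_config:
  assumes "k < nat (min (i - iL) (iR - i))"
  shows "zmax L alpha (window_config L m iL iR k) = zc L alpha m i"
    and "amax L alpha (window_config L m iL iR k) = i"
    and "\<exists>js. zfa_iter L alpha (window_config L m iL iR k) js (window_config L m iL iR (Suc k))
      \<and> mset js = mset (map (\<lambda>j. j mod int L) [iL + int (Suc k)..iR - int (Suc k)])"
proof -
  define mk where "mk = window_config L m iL iR k"
  have k: "iL + int (Suc k) \<le> i" "i \<le> iR - int (Suc k)" using assms by auto
  then have k': "iL + int k < i" "i < iR - int k" by auto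
  have zi: "zc L alpha mk i = zc L alpha m i"
    unfolding mk_def using k' by (intro zc_window_config_inner)
  have le: "zc L alpha mk y \<le> zc L alpha mk i" for y
    unfolding zi unfolding mk_def using k' by (intro zc_window_config_le) auto
  show "zmax L alpha mk = zc L alpha m i" "amax L alpha mk = i"
    using zmax_amax_eq[OF L gen i le] zi by auto
  have "\<exists>js. zfa_iter L alpha mk js
      (add_on_sites L mk (arc L (iL + int (Suc k)) (iR - int (Suc k))))
      \<and> mset js = mset (map (\<lambda>j. j mod int L) [iL + int (Suc k)..iR - int (Suc k)])"
  proof (rule zfa_iter_fills_arc[OF L gen i k _ le])
    show "iR - int (Suc k) - (iL + int (Suc k)) + 2 \<le> int L" using window_width_le by simp
    show "zc L alpha mk i - 1 < zc L alpha mk y"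
      if "iL + int (Suc k) \<le> y" "y \<le> iR - int (Suc k)" for y
      using zc_window_config_inner[of k y] zc_interior_gt[of y] that zi iLR unfolding mk_def by simp
  qed (use zc_window_config_ends[OF k'] zi in \<open>simp_all add: mk_def\<close>)
  then show "\<exists>js. zfa_iter L alpha mk js (window_config L m iL iR (Suc k))
      \<and> mset js = mset (map (\<lambda>j. j mod int L) [iL + int (Suc k)..iR - int (Suc k)])"
    unfolding mk_def by simp
qed

lemma zfa_window_jumps_exist:
  "\<exists>jss. \<forall>k<nat (min (i - iL) (iR - i)).
    zfa_iter L alpha (window_config L m iL iR k) (jss (Suc k)) (window_config L m iL iR (Suc k))
    \<and> mset (jss (Suc k)) = mset (map (\<lambda>j. j mod int L) [iL + int (Suc k)..iR - int (Suc k)])"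
proof -
  have "\<forall>k. \<exists>js. k < nat (min (i - iL) (iR - i)) \<longrightarrow>
    zfa_iter L alpha (window_config L m iL iR k) js (window_config L m iL iR (Suc k))
    \<and> mset js = mset (map (\<lambda>j. j mod int L) [iL + int (Suc k)..iR - int (Suc k)])"
    using zfa_iter_window_config(3) by blast
  then obtain f where "\<forall>k. k < nat (min (i - iL) (iR - i)) \<longrightarrow>
    zfa_iter L alpha (window_config L m iL iR k) (f k) (window_config L m iL iR (Suc k))
    \<and> mset (f k) = mset (map (\<lambda>j. j mod int L) [iL + int (Suc k)..iR - int (Suc k)])"
    by (rule choice[THEN exE])
  then show ?thesis by (intro exI[of _ "\<lambda>n. f (n - 1)"]) simp
qed

lemma zc_window_config_final:
  "zc L alpha (window_config L m iL iR (nat (min (i - iL) (iR - i)))) y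
    = zc L alpha m y + ind L iL y + ind L iR y - ind L i y - ind L (iL + iR - i) y"
proof -
  define l where "l = nat (min (i - iL) (iR - i))"
  have "iL + int l = i \<and> iR - int l = iL + iR - i \<or> iL + int l = iL + iR - i \<and> iR - int l = i"
    using iLR unfolding l_def by (cases "i - iL \<le> iR - i") auto
  then have "ind L (iL + int l) y + ind L (iR - int l) y = ind L i y + ind L (iL + iR - i) y"
    by auto
  moreover have "2 * int l \<le> iR - iL + 1" using iLR unfolding l_def by linarith
  ultimately show ?thesis
    using zc_window_config[OF L, of l iR iL alpha m y] unfolding l_def by simp
qed

lemma window_config_final_mod_eq:
  assumes "iL \<le> j" "j < iL + int L"
  shows "window_config L m iL iR (nat (min (i - iL) (iR - i))) (j mod int L) = m (j mod int L)
    + pos (j - iL) - pos (j - i) - pos (j - (iL + iR - i)) + pos (j - iR)"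
  using window_config_mod_eq[OF L window_width_le assms] window_profile_eq_pos[OF iLR assms(1)] iLR
  by simp

end

lemma sum_length_window_jumps:
  fixes i iL iR :: int
  assumes "iL < i" "i < iR"
    and "\<forall>k<nat (min (i - iL) (iR - i)).
      mset (jss (Suc k)) = mset (map (\<lambda>j. j mod int L) [iL + int (Suc k)..iR - int (Suc k)])"
  shows "int (\<Sum>k\<in>{1..nat (min (i - iL) (iR - i))}. length (jss k)) = (i - iL) * (iR - i)"
proof -
  define l where "l = nat (min (i - iL) (iR - i))"
  have "(\<Sum>k\<in>{1..l}. length (jss k)) = (\<Sum>k\<in>{1..l}. length [iL + int k..iR - int k])"
  proof (rule sum.cong[OF refl])
    fix k assume "k \<in> {1..l}"
    then obtain k' where "k = Suc k'" "k' < l" by (cases k) auto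
    then show "length (jss k) = length [iL + int k..iR - int k]"
      using assms(3) unfolding l_def by (metis length_map size_mset)
  qed
  also have "int \<dots> = int l * (iR - iL - int l)"
    using assms(1,2) unfolding l_def by (intro sum_length_shrinking_upto) linarith
  also have "\<dots> = (i - iL) * (iR - i)"
    using assms(1,2) unfolding l_def by (cases "i - iL \<le> iR - i") (auto simp: algebra_simps)
  finally show ?thesis unfolding l_def .
qed

theorem proposition3:
  fixes L :: nat and alpha :: "int \<Rightarrow> real" and m :: "int \<Rightarrow> int"
    and i iL iR :: int
  assumes "0 < L"
    and "\<forall>j\<in>{0..<int L}. -1/2 < alpha j \<and> alpha j < 1/2"
    and "generic L alpha"
    and "\<not> threshold L alpha m"
    and "i \<in> {0..<int L}" and "zc L alpha m i = zmax L alpha m"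
    and "iL < i" and "i < iR"
    and "zc L alpha m iL + 1 \<le> zc L alpha m i"
    and "zc L alpha m iR + 1 \<le> zc L alpha m i"
    and "\<forall>j. iL < j \<and> j < iR \<longrightarrow> zc L alpha m i < zc L alpha m j + 1"
  shows "let l = nat (min (i - iL) (iR - i)) in
    \<exists>ms :: nat \<Rightarrow> int \<Rightarrow> int. \<exists>jss :: nat \<Rightarrow> int list.
      ms 0 = m \<and>
      (\<forall>k<l. zfa_iter L alpha (ms k) (jss (Suc k)) (ms (Suc k)) \<and>
              mset (jss (Suc k)) =
                mset (map (\<lambda>j. j mod int L) [iL + int (Suc k) .. iR - int (Suc k)]) \<and>
              amax L alpha (ms k) = i \<and>
              zmax L alpha (ms k) = zc L alpha m i) \<and>
      int (\<Sum>k\<in>{1..l}. length (jss k)) = (i - iL) * (iR - i) \<and>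
      (\<forall>j. zc L alpha (ms l) j = zc L alpha m j + ind L iL j + ind L iR j
                                  - ind L i j - ind L (iL + iR - i) j) \<and>
      (\<forall>j. iL \<le> j \<and> j < iL + int L \<longrightarrow>
         ms l (j mod int L) = m (j mod int L)
           + pos (j - iL) - pos (j - i) - pos (j - (iL + iR - i)) + pos (j - iR))"
proof -
  note hyps = assms(1,3-11)
  obtain jss where jss: "\<forall>k<nat (min (i - iL) (iR - i)).
      zfa_iter L alpha (window_config L m iL iR k) (jss (Suc k)) (window_config L m iL iR (Suc k))
      \<and> mset (jss (Suc k)) = mset (map (\<lambda>j. j mod int L) [iL + int (Suc k)..iR - int (Suc k)])"
    using zfa_window_jumps_exist[OF hyps] by blast
  moreover have "int (\<Sum>k\<in>{1..nat (min (i - iL) (iR - i))}. length (jss k)) = (i - iL) * (iR - i)"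
    using jss by (intro sum_length_window_jumps[OF assms(7,8)]) blast
  ultimately show ?thesis
    unfolding Let_def
    using zfa_iter_window_config(1,2)[OF hyps] zc_window_config_final[OF hyps]
      window_config_final_mod_eq[OF hyps]
    by (intro exI[of _ "window_config L m iL iR"] exI[of _ jss]) auto
qed

end
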